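(* Let $n\in\mathbb{N}$, $N=2^{2n}$ and $1\le\kappa\le 2^n$. Any quantum algorithm that makes $T$ queries to $\varphi$ and $\varphi^{-1}$, where $\varphi\sim S_N^{\kappa}$ is a uniformly random permutation of $\{0,1\}^{2n}$ with exactly $\kappa$ zero pairs, and outputs a zero pair of $\varphi$ with probability $\epsilon>0$, satisfies $$\epsilon\le 2(T+1)\sqrt{\frac{\kappa}{2^n}}.$$
   Context: A zero pair of a permutation $\varphi$ of $\{0,1\}^{2n}$ is a pair $(x,y)\in\{0,1\}^n\times\{0,1\}^n$ with $\varphi(x\|0^n)=y\|0^n$; $S_N^{\kappa}$ is the set of permutations of $\{0,1\}^{2n}$ with exactly $\kappa$ zero pairs. Queries are to the unitaries $O_\varphi:|a\rangle|b\rangle\mapsto|a\rangle|b\oplus\varphi(a)\rangle$ and $O_{\varphi^{-1}}:|a\rangle|b\rangle\mapsto|a\rangle|b\oplus\varphi^{-1}(a)\rangle$. *)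

theory Defs
  imports "HOL-Analysis.Analysis" "HOL-Combinatorics.Permutations"
begin

text \<open>Bit strings in {0,1}^m are encoded as naturals below 2^m; the concatenation
 x || 0^n (x of length n) is encoded as x * 2^n.  XOR of bit strings is the bitwise
 xor on naturals.\<close>

definition NN :: "nat \<Rightarrow> nat" where "NN n = 2 ^ (2 * n)"

definition zero_pair :: "nat \<Rightarrow> (nat \<Rightarrow> nat) \<Rightarrow> nat \<times> nat \<Rightarrow> bool" where
  "zero_pair n \<phi> p \<longleftrightarrow> fst p < 2 ^ n \<and> snd p < 2 ^ n \<and> \<phi> (fst p * 2 ^ n) = snd p * 2 ^ n"

definition zero_pairs :: "nat \<Rightarrow> (nat \<Rightarrow> nat) \<Rightarrow> (nat \<times> nat) set" where
  "zero_pairs n \<phi> = {p. zero_pair n \<phi> p}"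

definition S_kappa :: "nat \<Rightarrow> nat \<Rightarrow> (nat \<Rightarrow> nat) set" where
  "S_kappa n \<kappa> = {\<phi>. \<phi> permutes {..<NN n} \<and> card (zero_pairs n \<phi>) = \<kappa>}"

text \<open>Computational basis of the algorithm's register: (c, a, b, w) where
 c selects the query type (False: O_phi, True: O_phi^-1), a and b are the query
 registers in {0,1}^{2n}, and w ranges over an arbitrary finite workspace.\<close>
type_synonym 'w basis = "bool \<times> nat \<times> nat \<times> 'w"
type_synonym 'w qstate = "'w basis \<Rightarrow> complex"
type_synonym 'w qmat = "'w basis \<Rightarrow> 'w basis \<Rightarrow> complex"

definition Basis :: "nat \<Rightarrow> 'w basis set" where
  "Basis n = UNIV \<times> {..<NN n} \<times> {..<NN n} \<times> UNIV"

definition apply_mat :: "nat \<Rightarrow> 'w qmat \<Rightarrow> 'w qstate \<Rightarrow> 'w qstate" where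
  "apply_mat n U v = (\<lambda>s. \<Sum>t\<in>Basis n. U s t * v t)"

definition unitary_mat :: "nat \<Rightarrow> ('w::finite) qmat \<Rightarrow> bool" where
  "unitary_mat n U \<longleftrightarrow> (\<forall>s\<in>Basis n. \<forall>s'\<in>Basis n.
      (\<Sum>t\<in>Basis n. cnj (U t s) * U t s') = (if s = s' then 1 else 0))"

definition query_op :: "(nat \<Rightarrow> nat) \<Rightarrow> 'w qstate \<Rightarrow> 'w qstate" where
  "query_op \<phi> v = (\<lambda>(c, a, b, w). v (c, a, xor b ((if c then inv \<phi> else \<phi>) a), w))"

text \<open>run n phi [U_0,...,U_T] v = U_T O ... O U_1 O U_0 v  (T queries).\<close>
fun run :: "nat \<Rightarrow> (nat \<Rightarrow> nat) \<Rightarrow> 'w qmat list \<Rightarrow> 'w qstate \<Rightarrow> 'w qstate" where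
  "run n \<phi> [] v = v"
| "run n \<phi> [U] v = apply_mat n U v"
| "run n \<phi> (U # V # Us) v = run n \<phi> (V # Us) (query_op \<phi> (apply_mat n U v))"

definition ket :: "'w basis \<Rightarrow> 'w qstate" where
  "ket s0 = (\<lambda>s. if s = s0 then 1 else 0)"

definition success_prob :: "nat \<Rightarrow> (nat \<Rightarrow> nat) \<Rightarrow> 'w qmat list \<Rightarrow> 'w basis \<Rightarrow>
    ('w basis \<Rightarrow> nat \<times> nat) \<Rightarrow> real" where
  "success_prob n \<phi> Us s0 out =
     (\<Sum>s\<in>Basis n. if zero_pair n \<phi> (out s) then (cmod (run n \<phi> Us (ket s0) s))\<^sup>2 else 0)"

definition avg_success :: "nat \<Rightarrow> nat \<Rightarrow> 'w qmat list \<Rightarrow> 'w basis \<Rightarrow>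
    ('w basis \<Rightarrow> nat \<times> nat) \<Rightarrow> real" where
  "avg_success n \<kappa> Us s0 out =
     (\<Sum>\<phi>\<in>S_kappa n \<kappa>. success_prob n \<phi> Us s0 out) / real (card (S_kappa n \<kappa>))"

end

theory Submission
  imports Defs
begin

text \<open>
  Let \<open>\<sigma>\<close> be an involution matching the \<open>\<kappa>\<close> inputs \<open>x\<parallel>0\<^sup>n\<close> of zero pairs of \<open>\<phi>\<close> with \<open>\<kappa>\<close>
  inputs that neither lie in nor map into the zero block. Then \<open>\<psi> = \<phi> \<circ> \<sigma>\<close> has no zero pair,
  \<open>\<sigma>\<close> matches \<open>\<kappa>\<close> points of the zero block with \<open>\<kappa>\<close> points of \<open>\<psi>\<^sup>-\<^sup>1\<close>(zero block), and
  \<open>(\<phi>, \<sigma>) \<mapsto> (\<phi> \<circ> \<sigma>, \<sigma>)\<close> is a bijection between the two kinds of pairs; since every \<open>\<phi>\<close>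
  admits equally many \<open>\<sigma>\<close>, averaging over \<open>\<phi> \<in> S\<^sub>N\<^sup>\<kappa>\<close> is averaging over \<open>\<psi> \<in> S\<^sub>N\<^sup>0\<close> and its
  matchings \<open>\<sigma>\<close>. By symmetry under transpositions, each input is moved by at most a fraction
  \<open>\<kappa>/2\<^sup>n\<close> of these \<open>\<sigma>\<close>. A query to \<open>\<psi> \<circ> \<sigma>\<close> differs from one to \<open>\<psi>\<close> only on inputs
  moved by \<open>\<sigma>\<close>, so a hybrid argument with Cauchy-Schwarz bounds the averaged distance
  between the runs with \<open>\<psi> \<circ> \<sigma>\<close> and with \<open>\<psi>\<close> by \<open>2T\<surd>(\<kappa>/2\<^sup>n)\<close>; and the run with \<open>\<psi>\<close>, which
  does not depend on \<open>\<sigma>\<close>, outputs a zero pair of \<open>\<psi> \<circ> \<sigma>\<close>, whose input \<sigma> must move, with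
  averaged amplitude at most \<open>\<surd>(\<kappa>/2\<^sup>n)\<close>.
\<close>

section \<open>Partial matchings as involutions\<close>

definition matchings :: "'a set \<Rightarrow> 'a set \<Rightarrow> nat \<Rightarrow> ('a \<Rightarrow> 'a) set" where
  "matchings Z Y k = {\<sigma>. \<sigma> permutes (Z \<union> Y) \<and> (\<forall>x. \<sigma> (\<sigma> x) = x) \<and>
     (\<forall>x\<in>Z. \<sigma> x \<noteq> x \<longrightarrow> \<sigma> x \<in> Y) \<and> (\<forall>x\<in>Y. \<sigma> x \<noteq> x \<longrightarrow> \<sigma> x \<in> Z) \<and>
     card {x\<in>Z. \<sigma> x \<noteq> x} = k}"

lemma matchingsD:
  assumes "\<sigma> \<in> matchings Z Y k"
  shows "\<sigma> permutes (Z \<union> Y)" "\<sigma> (\<sigma> x) = x" "x \<in> Z \<Longrightarrow> \<sigma> x \<noteq> x \<Longrightarrow> \<sigma> x \<in> Y"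
    "x \<in> Y \<Longrightarrow> \<sigma> x \<noteq> x \<Longrightarrow> \<sigma> x \<in> Z" "card {x\<in>Z. \<sigma> x \<noteq> x} = k"
  using assms unfolding matchings_def by auto

lemma involution_permutes:
  assumes "\<And>x. \<sigma> (\<sigma> x) = x" "\<And>x. x \<notin> S \<Longrightarrow> \<sigma> x = x"
  shows "\<sigma> permutes S"
  unfolding permutes_def using assms by metis

lemma matchings_permutes: "\<sigma> \<in> matchings Z Y k \<Longrightarrow> Z \<union> Y \<subseteq> S \<Longrightarrow> \<sigma> permutes S"
  using matchingsD(1) permutes_subset by blast

lemma matchings_comp_cancel: "\<sigma> \<in> matchings Z Y k \<Longrightarrow> f \<circ> \<sigma> \<circ> \<sigma> = f"
  by (simp add: fun_eq_iff matchingsD(2))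

lemma finite_matchings: "finite Z \<Longrightarrow> finite Y \<Longrightarrow> finite (matchings Z Y k)"
  by (rule finite_subset[of _ "{\<sigma>. \<sigma> permutes (Z \<union> Y)}"])
    (auto simp: matchings_def intro: finite_permutations)

lemma conj_in_matchings:
  fixes \<pi> :: "'a \<Rightarrow> 'a"
  assumes \<pi>: "bij \<pi>" and \<sigma>: "\<sigma> \<in> matchings Z Y k"
  shows "\<pi> \<circ> \<sigma> \<circ> inv \<pi> \<in> matchings (\<pi> ` Z) (\<pi> ` Y) k"
proof -
  note s = matchingsD[OF \<sigma>]
  define \<rho> where "\<rho> = \<pi> \<circ> \<sigma> \<circ> inv \<pi>"
  have inj: "inj \<pi>" using \<pi> by (rule bij_is_inj)
  have \<rho>\<pi>: "\<rho> (\<pi> x) = \<pi> (\<sigma> x)" for x unfolding \<rho>_def using inj by simp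
  have all: "\<forall>x. P x" if "\<And>x. P (\<pi> x)" for P
    using that \<pi> by (metis bij_inv_eq_iff)
  have moved: "{x\<in>\<pi> ` Z. \<rho> x \<noteq> x} = \<pi> ` {x\<in>Z. \<sigma> x \<noteq> x}"
    using inj by (auto simp: \<rho>\<pi> inj_eq)
  have "\<rho> permutes (\<pi> ` Z \<union> \<pi> ` Y)"
  proof (rule involution_permutes)
    show "\<rho> (\<rho> x) = x" for x using all[of "\<lambda>x. \<rho> (\<rho> x) = x"] by (simp add: \<rho>\<pi> s(2))
    show "\<rho> x = x" if "x \<notin> \<pi> ` Z \<union> \<pi> ` Y" for x
      using all[of "\<lambda>x. x \<notin> \<pi> ` Z \<union> \<pi> ` Y \<longrightarrow> \<rho> x = x"] that
      by (simp add: \<rho>\<pi> inj_image_mem_iff[OF inj] permutes_not_in[OF s(1)])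
  qed
  moreover have "\<forall>x\<in>\<pi> ` Z. \<rho> x \<noteq> x \<longrightarrow> \<rho> x \<in> \<pi> ` Y" "\<forall>x\<in>\<pi> ` Y. \<rho> x \<noteq> x \<longrightarrow> \<rho> x \<in> \<pi> ` Z"
    using s(3,4) by (auto simp: \<rho>\<pi> inj_image_mem_iff[OF inj] inj_eq[OF inj])
  moreover have "card (\<pi> ` {x\<in>Z. \<sigma> x \<noteq> x}) = k"
    using s(5) by (simp add: card_image inj_on_subset[OF inj])
  moreover have "\<forall>x. \<rho> (\<rho> x) = x" using all[of "\<lambda>x. \<rho> (\<rho> x) = x"] by (simp add: \<rho>\<pi> s(2))
  ultimately show ?thesis unfolding matchings_def \<rho>_def[symmetric] mem_Collect_eq moved by blast
qed

lemma bij_betw_conj_matchings: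
  fixes \<pi> :: "'a \<Rightarrow> 'a"
  assumes "bij \<pi>"
  shows "bij_betw (\<lambda>\<sigma>. \<pi> \<circ> \<sigma> \<circ> inv \<pi>) (matchings Z Y k) (matchings (\<pi> ` Z) (\<pi> ` Y) k)"
proof (rule bij_betw_byWitness[where f' = "\<lambda>\<sigma>. inv \<pi> \<circ> \<sigma> \<circ> \<pi>"])
  have inv: "inv \<pi> (\<pi> x) = x" "\<pi> (inv \<pi> x) = x" for x
    using assms by (simp_all add: bij_is_inj bij_is_surj surj_f_inv_f)
  then show "\<forall>\<sigma>\<in>matchings Z Y k. inv \<pi> \<circ> (\<pi> \<circ> \<sigma> \<circ> inv \<pi>) \<circ> \<pi> = \<sigma>"
    and "\<forall>\<sigma>\<in>matchings (\<pi> ` Z) (\<pi> ` Y) k. \<pi> \<circ> (inv \<pi> \<circ> \<sigma> \<circ> \<pi>) \<circ> inv \<pi> = \<sigma>"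
    by (auto simp: fun_eq_iff)
  show "(\<lambda>\<sigma>. \<pi> \<circ> \<sigma> \<circ> inv \<pi>) ` matchings Z Y k \<subseteq> matchings (\<pi> ` Z) (\<pi> ` Y) k"
    using conj_in_matchings[OF assms] by blast
  have "inv \<pi> \<circ> \<sigma> \<circ> \<pi> \<in> matchings Z Y k" if "\<sigma> \<in> matchings (\<pi> ` Z) (\<pi> ` Y) k" for \<sigma>
    using conj_in_matchings[OF bij_imp_bij_inv[OF assms] that]
    by (simp add: inv_inv_eq[OF assms] image_image inv)
  then show "(\<lambda>\<sigma>. inv \<pi> \<circ> \<sigma> \<circ> \<pi>) ` matchings (\<pi> ` Z) (\<pi> ` Y) k \<subseteq> matchings Z Y k"
    by blast
qed

lemma matchings_card_moved_right:
  assumes \<sigma>: "\<sigma> \<in> matchings Z Y k"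
  shows "card {x\<in>Y. \<sigma> x \<noteq> x} = k"
proof -
  note s = matchingsD[OF \<sigma>]
  have "\<sigma> ` {x\<in>Z. \<sigma> x \<noteq> x} = {x\<in>Y. \<sigma> x \<noteq> x}"
  proof (intro equalityI subsetI)
    fix y assume "y \<in> \<sigma> ` {x\<in>Z. \<sigma> x \<noteq> x}"
    then obtain x where "x \<in> Z" "\<sigma> x \<noteq> x" "y = \<sigma> x" by blast
    then show "y \<in> {x\<in>Y. \<sigma> x \<noteq> x}" using s(2,3) by force
  next
    fix y assume "y \<in> {x\<in>Y. \<sigma> x \<noteq> x}"
    then have "\<sigma> y \<in> {x\<in>Z. \<sigma> x \<noteq> x}" using s(2,4) by force
    then show "y \<in> \<sigma> ` {x\<in>Z. \<sigma> x \<noteq> x}" using s(2)[of y] by (metis image_eqI)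
  qed
  then show ?thesis
    using s(5) card_image[OF inj_on_subset[OF permutes_inj[OF s(1)] subset_UNIV]] by metis
qed

lemma matchings_commute: "matchings Z Y k = matchings Y Z k"
proof -
  have "matchings Z Y k \<subseteq> matchings Y Z k" for Z Y :: "'a set"
  proof
    fix \<sigma> assume \<sigma>: "\<sigma> \<in> matchings Z Y k"
    show "\<sigma> \<in> matchings Y Z k"
      using matchingsD[OF \<sigma>] matchings_card_moved_right[OF \<sigma>]
      unfolding matchings_def Un_commute[of Z Y] by blast
  qed
  then show ?thesis by blast
qed

lemma card_matchings_moving_eq:
  fixes b b' :: 'a
  assumes "b \<in> Z \<longleftrightarrow> b' \<in> Z" "b \<in> Y \<longleftrightarrow> b' \<in> Y"
  shows "card {\<sigma>\<in>matchings Z Y k. \<sigma> b \<noteq> b} = card {\<sigma>\<in>matchings Z Y k. \<sigma> b' \<noteq> b'}"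
proof -
  define \<tau> where "\<tau> = Transposition.transpose b b'"
  define c where "c \<sigma> = \<tau> \<circ> \<sigma> \<circ> inv \<tau>" for \<sigma> :: "'a \<Rightarrow> 'a"
  have img: "\<tau> ` Z = Z" "\<tau> ` Y = Y" using assms unfolding \<tau>_def by (simp_all only: transpose_image_eq)
  have conj: "bij_betw c (matchings Z Y k) (matchings Z Y k)"
    using bij_betw_conj_matchings[of \<tau> Z Y k] unfolding img c_def by (simp add: \<tau>_def)
  have moved: "c \<sigma> b' \<noteq> b' \<longleftrightarrow> \<sigma> b \<noteq> b" for \<sigma>
  proof -
    have "c \<sigma> b' = \<tau> (\<sigma> b)" by (simp add: c_def \<tau>_def)
    moreover have "\<tau> x = b' \<longleftrightarrow> x = b" for x
      unfolding \<tau>_def by (metis transpose_apply_first transpose_eq_imp_eq)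
    ultimately show ?thesis by simp
  qed
  have image: "c ` {\<sigma>\<in>matchings Z Y k. \<sigma> b \<noteq> b} = {\<sigma>\<in>matchings Z Y k. \<sigma> b' \<noteq> b'}"
  proof (intro equalityI subsetI)
    fix \<rho> assume "\<rho> \<in> {\<sigma>\<in>matchings Z Y k. \<sigma> b' \<noteq> b'}"
    moreover from this obtain \<sigma> where "\<sigma> \<in> matchings Z Y k" "\<rho> = c \<sigma>"
      using conj unfolding bij_betw_def by blast
    ultimately show "\<rho> \<in> c ` {\<sigma>\<in>matchings Z Y k. \<sigma> b \<noteq> b}"
      using moved by blast
  next
    fix \<rho> assume "\<rho> \<in> c ` {\<sigma>\<in>matchings Z Y k. \<sigma> b \<noteq> b}"
    then show "\<rho> \<in> {\<sigma>\<in>matchings Z Y k. \<sigma> b' \<noteq> b'}"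
      using moved bij_betwE[OF conj] by blast
  qed
  have "inj_on c {\<sigma>\<in>matchings Z Y k. \<sigma> b \<noteq> b}"
    using inj_on_subset[OF bij_betw_imp_inj_on[OF conj] Collect_restrict] .
  from card_image[OF this] show ?thesis unfolding image by (rule sym)
qed

lemma card_filter_eq_sum:
  "finite A \<Longrightarrow> card {x\<in>A. P x} = (\<Sum>x\<in>A. if P x then 1 else 0)"
  by (simp add: sum.inter_filter[symmetric])

lemma card_matchings_moving:
  assumes fin: "finite Z" "finite Y" and dj: "Z \<inter> Y = {}" and b: "b \<in> Z"
  shows "card {\<sigma>\<in>matchings Z Y k. \<sigma> b \<noteq> b} * card Z = k * card (matchings Z Y k)"
proof -
  let ?M = "matchings Z Y k"
  have fM: "finite ?M" using finite_matchings[OF fin] .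
  have "card {\<sigma>\<in>?M. \<sigma> b \<noteq> b} * card Z = (\<Sum>b'\<in>Z. card {\<sigma>\<in>?M. \<sigma> b \<noteq> b})"
    by simp
  also have "\<dots> = (\<Sum>b'\<in>Z. card {\<sigma>\<in>?M. \<sigma> b' \<noteq> b'})"
  proof (rule sum.cong[OF refl])
    fix b' assume "b' \<in> Z"
    then show "card {\<sigma>\<in>?M. \<sigma> b \<noteq> b} = card {\<sigma>\<in>?M. \<sigma> b' \<noteq> b'}"
      using b dj by (intro card_matchings_moving_eq) blast+
  qed
  also have "\<dots> = (\<Sum>b'\<in>Z. \<Sum>\<sigma>\<in>?M. if \<sigma> b' \<noteq> b' then 1 else 0)"
    using fM by (simp add: card_filter_eq_sum)
  also have "\<dots> = (\<Sum>\<sigma>\<in>?M. \<Sum>b'\<in>Z. if \<sigma> b' \<noteq> b' then 1 else 0)"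
    by (rule sum.swap)
  also have "\<dots> = (\<Sum>\<sigma>\<in>?M. k)"
    using fin(1) by (intro sum.cong refl) (simp add: card_filter_eq_sum[symmetric] matchingsD(5))
  finally show ?thesis by simp
qed

lemma matchingsI:
  assumes inv: "\<And>x. \<sigma> (\<sigma> x) = x" and dj: "Z \<inter> Y = {}"
    and P: "P \<subseteq> Z" "\<sigma> ` P \<subseteq> Y" "card P = k"
    and moved: "\<And>x. \<sigma> x \<noteq> x \<longleftrightarrow> x \<in> P \<union> \<sigma> ` P"
  shows "\<sigma> \<in> matchings Z Y k"
proof -
  have "\<sigma> permutes (Z \<union> Y)"
  proof (rule involution_permutes[OF inv])
    fix x assume "x \<notin> Z \<union> Y"
    then have "x \<notin> P \<union> \<sigma> ` P" using P(1,2) by blast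
    then show "\<sigma> x = x" using moved[of x] by blast
  qed
  moreover have ZP: "{x\<in>Z. \<sigma> x \<noteq> x} = P"
  proof (intro equalityI subsetI)
    fix x assume "x \<in> {x\<in>Z. \<sigma> x \<noteq> x}"
    then show "x \<in> P" using moved[of x] P(2) dj by blast
  next
    fix x assume "x \<in> P"
    then show "x \<in> {x\<in>Z. \<sigma> x \<noteq> x}" using moved[of x] P(1) by blast
  qed
  moreover have "\<sigma> x \<in> Z" if x: "x \<in> Y" "\<sigma> x \<noteq> x" for x
  proof -
    have "x \<notin> P" using x(1) P(1) dj by blast
    then obtain p where "p \<in> P" "x = \<sigma> p" using moved[of x] x(2) by blast
    then show ?thesis using inv[of p] P(1) by auto
  qed
  moreover have "\<sigma> x \<in> Y" if "x \<in> Z" "\<sigma> x \<noteq> x" for x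
    using that ZP P(2) by blast
  ultimately show ?thesis unfolding matchings_def using inv P(3) by blast
qed

lemma matchings_moved:
  assumes \<sigma>: "\<sigma> \<in> matchings Z Y k"
  shows "\<sigma> ` {x\<in>Z. \<sigma> x \<noteq> x} \<subseteq> Y" "\<sigma> x \<noteq> x \<longleftrightarrow> x \<in> {x\<in>Z. \<sigma> x \<noteq> x} \<union> \<sigma> ` {x\<in>Z. \<sigma> x \<noteq> x}"
proof -
  note s = matchingsD[OF \<sigma>]
  show "\<sigma> ` {x\<in>Z. \<sigma> x \<noteq> x} \<subseteq> Y" using s(3) by blast
  have "x \<in> Z \<union> Y" if "\<sigma> x \<noteq> x" using that permutes_not_in[OF s(1)] by blast
  then show "\<sigma> x \<noteq> x \<longleftrightarrow> x \<in> {x\<in>Z. \<sigma> x \<noteq> x} \<union> \<sigma> ` {x\<in>Z. \<sigma> x \<noteq> x}"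
    using s(2,4) by (smt (verit) Un_iff image_iff mem_Collect_eq)
qed

lemma matchings_nonempty:
  assumes dj: "A \<inter> G = {}" and fin: "finite A" "finite G" and le: "card A \<le> card G"
  shows "matchings A G (card A) \<noteq> {}"
proof -
  obtain g where g: "inj_on g A" "g ` A \<subseteq> G" using card_le_inj[OF fin le] by blast
  define \<sigma> where "\<sigma> x = (if x \<in> A then g x else if x \<in> g ` A then the_inv_into A g x else x)" for x
  have gA: "g x \<notin> A" if "x \<in> A" for x using that g(2) dj by blast
  have \<sigma>A: "\<sigma> ` A = g ` A" unfolding \<sigma>_def by simp
  have inv: "\<sigma> (\<sigma> x) = x" for x
    using gA the_inv_into_f_f[OF g(1)] f_the_inv_into_f[OF g(1)] the_inv_into_into[OF g(1) _ subset_refl]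
    unfolding \<sigma>_def by (cases "x \<in> A"; cases "x \<in> g ` A") auto
  have moved: "\<sigma> x \<noteq> x \<longleftrightarrow> x \<in> A \<union> \<sigma> ` A" for x
  proof (cases "x \<in> A")
    case True
    then show ?thesis using gA[OF True] by (auto simp: \<sigma>_def)
  next
    case False
    then show ?thesis
      using the_inv_into_into[OF g(1) _ subset_refl, of x] by (auto simp: \<sigma>_def \<sigma>A)
  qed
  then have "\<sigma> \<in> matchings A G (card A)"
    using g(2) by (intro matchingsI[OF inv dj, of A] moved) (simp_all add: \<sigma>A)
  then show ?thesis by blast
qed

lemma ex_bij_image_pair:
  assumes S: "finite S" and sub: "A \<union> G \<subseteq> S" "A' \<union> G' \<subseteq> S"
    and dj: "A \<inter> G = {}" "A' \<inter> G' = {}"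
    and cA: "card A = card A'" and cG: "card G = card G'"
  shows "\<exists>\<pi>. bij \<pi> \<and> \<pi> ` A = A' \<and> \<pi> ` G = G'"
proof -
  define R where "R = S - (A \<union> G)"
  define R' where "R' = S - (A' \<union> G')"
  have fin: "finite A" "finite G" "finite A'" "finite G'" "finite R" "finite R'"
    using S sub finite_subset unfolding R_def R'_def by auto
  have "card R = card R'"
    using S sub cA cG dj unfolding R_def R'_def by (simp add: card_Diff_subset card_Un_disjoint fin)
  then obtain f3 where f3: "bij_betw f3 R R'" using finite_same_card_bij[OF fin(5,6)] by blast
  obtain f1 where f1: "bij_betw f1 A A'" using finite_same_card_bij[OF fin(1,3) cA] by blast
  obtain f2 where f2: "bij_betw f2 G G'" using finite_same_card_bij[OF fin(2,4) cG] by blast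
  define \<pi> where "\<pi> x = (if x \<in> A then f1 x else if x \<in> G then f2 x else if x \<in> R then f3 x else x)" for x
  have b1: "bij_betw \<pi> A A'" using f1 by (rule bij_betw_cong[THEN iffD1, rotated]) (simp add: \<pi>_def)
  have b2: "bij_betw \<pi> G G'" using f2 dj(1) by (subst bij_betw_cong[of G \<pi> f2]) (auto simp: \<pi>_def)
  have b3: "bij_betw \<pi> R R'" using f3 by (subst bij_betw_cong[of R \<pi> f3]) (auto simp: \<pi>_def R_def)
  have "bij_betw \<pi> ((A \<union> G) \<union> R) ((A' \<union> G') \<union> R')"
    by (rule bij_betw_combine[OF bij_betw_combine[OF b1 b2] b3]) (use dj in \<open>auto simp: R'_def\<close>)
  moreover have "(A \<union> G) \<union> R = S" "(A' \<union> G') \<union> R' = S" using sub unfolding R_def R'_def by auto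
  moreover have "\<pi> x = x" if "x \<notin> S" for x using that sub unfolding \<pi>_def R_def by auto
  ultimately have "\<pi> permutes S" by (intro bij_imp_permutes) simp_all
  then show ?thesis using b1 b2 permutes_bij unfolding bij_betw_def by blast
qed

section \<open>Query operators and the norm of states\<close>

definition query_perm :: "(nat \<Rightarrow> nat) \<Rightarrow> 'w basis \<Rightarrow> 'w basis" where
  "query_perm \<phi> = (\<lambda>(c, a, b, w). (c, a, xor b ((if c then inv \<phi> else \<phi>) a), w))"

definition qnorm :: "nat \<Rightarrow> 'w qstate \<Rightarrow> real" where
  "qnorm n v = L2_set (\<lambda>s. cmod (v s)) (Basis n)"

definition weight :: "nat \<Rightarrow> ('w basis \<Rightarrow> bool) \<Rightarrow> 'w qstate \<Rightarrow> real" where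
  "weight n P v = (\<Sum>s\<in>Basis n. if P s then (cmod (v s))\<^sup>2 else 0)"

lemma query_op_eq: "query_op \<phi> v = (\<lambda>s. v (query_perm \<phi> s))"
  by (auto simp: query_op_def query_perm_def fun_eq_iff)

lemma finite_Basis: "finite (Basis n :: ('w::finite) basis set)"
  unfolding Basis_def by simp

lemma xor_less_two_power:
  fixes a b :: nat
  assumes "a < 2 ^ k" "b < 2 ^ k"
  shows "xor a b < 2 ^ k"
proof -
  have "int (xor a b) < 2 ^ k"
    using XOR_upper[of "int a" k "int b"] assms by (simp add: of_nat_xor_eq)
  then show ?thesis by (metis of_nat_less_iff of_nat_numeral of_nat_power)
qed

lemma query_perm_involution: "query_perm \<phi> (query_perm \<phi> s) = s"
  by (auto simp: query_perm_def xor.assoc split: prod.splits)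

lemma query_perm_in_Basis:
  assumes \<phi>: "\<phi> permutes {..<NN n}" and s: "s \<in> Basis n"
  shows "query_perm \<phi> s \<in> Basis n"
proof -
  obtain c a b w where s_eq: "s = (c, a, b, w)" by (cases s)
  have ab: "a < NN n" "b < NN n" using s by (auto simp: s_eq Basis_def)
  then have "\<phi> a < NN n" "inv \<phi> a < NN n"
    using permutes_in_image[OF \<phi>] permutes_in_image[OF permutes_inv[OF \<phi>]] by auto
  then have "xor b ((if c then inv \<phi> else \<phi>) a) < NN n"
    using ab(2) unfolding NN_def by (intro xor_less_two_power) auto
  then show ?thesis using ab by (simp add: s_eq Basis_def query_perm_def)
qed

lemma sum_query_perm:
  assumes "\<phi> permutes {..<NN n}"
  shows "(\<Sum>s\<in>Basis n. f (query_perm \<phi> s)) = (\<Sum>s\<in>Basis n. f s)"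
proof -
  have "bij_betw (query_perm \<phi>) (Basis n) (Basis n)"
    by (rule bij_betw_byWitness[where f' = "query_perm \<phi>"])
      (auto simp: query_perm_involution query_perm_in_Basis[OF assms])
  then show ?thesis by (rule sum.reindex_bij_betw)
qed

lemma qnorm_sq: "(qnorm n v)\<^sup>2 = (\<Sum>s\<in>Basis n. (cmod (v s))\<^sup>2)"
  unfolding qnorm_def L2_set_def by (simp add: sum_nonneg)

lemma qnorm_query_op: "\<phi> permutes {..<NN n} \<Longrightarrow> qnorm n (query_op \<phi> v) = qnorm n v"
  unfolding qnorm_def L2_set_def query_op_eq
  using sum_query_perm[of \<phi> n "\<lambda>s. (cmod (v s))\<^sup>2"] by simp

lemma qnorm_apply_mat:
  fixes U :: "('w::finite) qmat"
  assumes U: "unitary_mat n U"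
  shows "qnorm n (apply_mat n U v) = qnorm n v"
proof -
  let ?B = "Basis n :: 'w basis set"
  have "complex_of_real (\<Sum>s\<in>?B. (cmod (\<Sum>t\<in>?B. U s t * v t))\<^sup>2)
      = (\<Sum>s\<in>?B. \<Sum>t\<in>?B. \<Sum>t'\<in>?B. (U s t * v t) * cnj (U s t' * v t'))"
    unfolding of_real_sum complex_norm_square by (simp add: sum_product)
  also have "\<dots> = (\<Sum>t\<in>?B. \<Sum>t'\<in>?B. \<Sum>s\<in>?B. (U s t * v t) * cnj (U s t' * v t'))"
    by (subst sum.swap) (rule sum.cong[OF refl], rule sum.swap)
  also have "\<dots> = (\<Sum>t\<in>?B. \<Sum>t'\<in>?B. v t * cnj (v t') * (\<Sum>s\<in>?B. cnj (U s t') * U s t))"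
    by (simp add: sum_distrib_left mult_ac)
  also have "\<dots> = (\<Sum>t\<in>?B. \<Sum>t'\<in>?B. v t * cnj (v t') * (if t' = t then 1 else 0))"
    using U unfolding unitary_mat_def by (intro sum.cong refl) simp
  also have "\<dots> = complex_of_real (\<Sum>t\<in>?B. (cmod (v t))\<^sup>2)"
    unfolding of_real_sum complex_norm_square by (simp add: finite_Basis if_distrib cong: if_cong)
  finally have "(\<Sum>s\<in>?B. (cmod (\<Sum>t\<in>?B. U s t * v t))\<^sup>2) = (\<Sum>t\<in>?B. (cmod (v t))\<^sup>2)"
    using of_real_eq_iff by blast
  then show ?thesis unfolding qnorm_def L2_set_def apply_mat_def by simp
qed

lemma qnorm_run:
  fixes Us :: "('w::finite) qmat list"
  assumes \<phi>: "\<phi> permutes {..<NN n}" and Us: "\<forall>U\<in>set Us. unitary_mat n U"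
  shows "qnorm n (run n \<phi> Us v) = qnorm n v"
  using Us
proof (induction Us arbitrary: v rule: induct_list012)
  case (3 U V Us)
  then show ?case by (simp add: qnorm_query_op[OF \<phi>] qnorm_apply_mat)
qed (simp_all add: qnorm_apply_mat)

lemma qnorm_ket:
  assumes "s0 \<in> Basis n" shows "qnorm n (ket s0 :: ('w::finite) qstate) = 1"
proof -
  have "(\<Sum>s\<in>Basis n. (cmod (ket s0 s))\<^sup>2) = (\<Sum>s\<in>Basis n. if s = s0 then 1 else (0::real))"
    by (rule sum.cong) (auto simp: ket_def)
  then show ?thesis using assms unfolding qnorm_def L2_set_def by (simp add: finite_Basis)
qed

lemma qnorm_triangle:
  "qnorm n (\<lambda>s. u s - w s) \<le> qnorm n (\<lambda>s. u s - v s) + qnorm n (\<lambda>s. v s - w s)"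
proof -
  have "qnorm n (\<lambda>s. u s - w s) \<le> L2_set (\<lambda>s. cmod (u s - v s) + cmod (v s - w s)) (Basis n)"
    unfolding qnorm_def
    by (rule L2_set_mono) (use norm_triangle_ineq[of "u s - v s" "v s - w s" for s] in simp_all)
  also have "\<dots> \<le> qnorm n (\<lambda>s. u s - v s) + qnorm n (\<lambda>s. v s - w s)"
    unfolding qnorm_def by (rule L2_set_triangle_ineq)
  finally show ?thesis .
qed

lemma apply_mat_diff: "(\<lambda>s. apply_mat n U u s - apply_mat n U v s) = apply_mat n U (\<lambda>s. u s - v s)"
  by (simp add: apply_mat_def fun_eq_iff algebra_simps sum_subtractf)

lemma query_op_diff: "(\<lambda>s. query_op \<phi> u s - query_op \<phi> v s) = query_op \<phi> (\<lambda>s. u s - v s)"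
  by (simp add: query_op_eq)

lemma sqrt_weight_eq:
  fixes v :: "('w::finite) qstate"
  shows "sqrt (weight n P v) = L2_set (\<lambda>s. cmod (v s)) {s\<in>Basis n. P s}"
  unfolding weight_def L2_set_def by (simp add: sum.inter_filter[OF finite_Basis])

lemma weight_le_qnorm_sq: "weight n P v \<le> (qnorm n v)\<^sup>2"
  unfolding weight_def qnorm_sq by (rule sum_mono) simp

lemma sqrt_weight_le_add_qnorm:
  fixes u v :: "('w::finite) qstate"
  shows "sqrt (weight n P u) \<le> sqrt (weight n P v) + qnorm n (\<lambda>s. u s - v s)"
proof -
  let ?B = "{s\<in>Basis n. P s}"
  have "sqrt (weight n P u) \<le> L2_set (\<lambda>s. cmod (v s) + cmod (u s - v s)) ?B"
    unfolding sqrt_weight_eq by (rule L2_set_mono) (simp_all add: norm_triangle_sub)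
  also have "\<dots> \<le> sqrt (weight n P v) + L2_set (\<lambda>s. cmod (u s - v s)) ?B"
    unfolding sqrt_weight_eq by (rule L2_set_triangle_ineq)
  also have "L2_set (\<lambda>s. cmod (u s - v s)) ?B \<le> qnorm n (\<lambda>s. u s - v s)"
    unfolding qnorm_def L2_set_def by (intro real_sqrt_le_mono sum_mono2 finite_Basis) auto
  finally show ?thesis by simp
qed

section \<open>The hybrid argument\<close>

text \<open>The input of \<open>\<psi>\<close> that a query in basis state \<open>s\<close> depends on: the oracles of \<open>\<psi> \<circ> \<sigma>\<close>
  and \<open>\<psi>\<close> act alike on \<open>s\<close> unless \<open>\<sigma>\<close> moves it.\<close>

definition query_point :: "(nat \<Rightarrow> nat) \<Rightarrow> 'w basis \<Rightarrow> nat" where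
  "query_point \<psi> = (\<lambda>(c, a, b, w). if c then inv \<psi> a else a)"

definition query_weight :: "nat \<Rightarrow> (nat \<Rightarrow> nat) \<Rightarrow> (nat \<Rightarrow> nat) \<Rightarrow> 'w qstate \<Rightarrow> real" where
  "query_weight n \<psi> \<sigma> = weight n (\<lambda>s. \<sigma> (query_point \<psi> s) \<noteq> query_point \<psi> s)"

lemma query_point_query_perm: "query_point \<psi> (query_perm \<phi> s) = query_point \<psi> s"
  by (auto simp: query_point_def query_perm_def split: prod.splits)

lemma query_perm_comp_fixed:
  assumes "bij \<psi>" "bij \<sigma>" and fixed: "\<sigma> (query_point \<psi> s) = query_point \<psi> s"
  shows "query_perm (\<psi> \<circ> \<sigma>) s = query_perm \<psi> s"
proof -
  obtain c a b w where s: "s = (c, a, b, w)" by (cases s)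
  have "inv (\<psi> \<circ> \<sigma>) a = inv \<sigma> (inv \<psi> a)" using o_inv_distrib[OF assms(1,2)] by simp
  also have "\<dots> = inv \<psi> a" if c
    using that fixed inv_f_f[OF bij_is_inj[OF assms(2)], of "inv \<psi> a"]
    by (simp add: s query_point_def)
  finally show ?thesis using fixed by (cases c) (simp_all add: s query_perm_def query_point_def)
qed

lemma qnorm_query_op_comp_diff:
  fixes y :: "('w::finite) qstate"
  assumes \<psi>: "\<psi> permutes {..<NN n}" and \<sigma>: "\<sigma> permutes {..<NN n}"
  shows "qnorm n (\<lambda>s. query_op (\<psi> \<circ> \<sigma>) y s - query_op \<psi> y s) \<le> 2 * sqrt (query_weight n \<psi> \<sigma> y)"
proof -
  define P where "P s \<longleftrightarrow> \<sigma> (query_point \<psi> s) \<noteq> query_point \<psi> s" for s :: "'w basis"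
  define g where "g s = (if P s then (cmod (y s))\<^sup>2 else 0)" for s
  have P_perm: "P (query_perm \<phi> s) = P s" for \<phi> s unfolding P_def query_point_query_perm ..
  have pointwise: "(cmod (y (query_perm (\<psi> \<circ> \<sigma>) s) - y (query_perm \<psi> s)))\<^sup>2
      \<le> 2 * g (query_perm (\<psi> \<circ> \<sigma>) s) + 2 * g (query_perm \<psi> s)" for s
  proof (cases "P s")
    case True
    have "(cmod (y (query_perm (\<psi> \<circ> \<sigma>) s) - y (query_perm \<psi> s)))\<^sup>2
        \<le> (cmod (y (query_perm (\<psi> \<circ> \<sigma>) s)) + cmod (y (query_perm \<psi> s)))\<^sup>2"
      by (simp add: power_mono norm_triangle_ineq4)
    also have "\<dots> \<le> 2 * (cmod (y (query_perm (\<psi> \<circ> \<sigma>) s)))\<^sup>2 + 2 * (cmod (y (query_perm \<psi> s)))\<^sup>2"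
      by (simp add: power2_sum) (smt (verit) sum_squares_bound)
    finally show ?thesis using True by (simp add: g_def P_perm)
  next
    case False
    then have "query_perm (\<psi> \<circ> \<sigma>) s = query_perm \<psi> s"
      using query_perm_comp_fixed[OF permutes_bij[OF \<psi>] permutes_bij[OF \<sigma>]] unfolding P_def by blast
    then show ?thesis by (simp add: g_def)
  qed
  have "(qnorm n (\<lambda>s. query_op (\<psi> \<circ> \<sigma>) y s - query_op \<psi> y s))\<^sup>2
      \<le> (\<Sum>s\<in>Basis n. 2 * g (query_perm (\<psi> \<circ> \<sigma>) s) + 2 * g (query_perm \<psi> s))"
    unfolding qnorm_sq query_op_eq by (rule sum_mono) (rule pointwise)
  also have "\<dots> = 4 * query_weight n \<psi> \<sigma> y"
    using sum_query_perm[OF permutes_compose[OF \<sigma> \<psi>], of g] sum_query_perm[OF \<psi>, of g]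
    by (simp add: sum.distrib sum_distrib_left[symmetric] query_weight_def weight_def g_def P_def)
  finally show ?thesis
    by (metis real_le_rsqrt real_sqrt_four real_sqrt_mult qnorm_def L2_set_nonneg)
qed

text \<open>The cost of replacing, one query at a time, \<open>\<psi> \<circ> \<sigma>\<close> by \<open>\<psi>\<close> along the run of \<open>\<psi>\<close>.\<close>

fun hybrid_error :: "nat \<Rightarrow> (nat \<Rightarrow> nat) \<Rightarrow> (nat \<Rightarrow> nat) \<Rightarrow> 'w qmat list \<Rightarrow> 'w qstate \<Rightarrow> real" where
  "hybrid_error n \<psi> \<sigma> [] v = 0"
| "hybrid_error n \<psi> \<sigma> [U] v = 0"
| "hybrid_error n \<psi> \<sigma> (U # V # Us) v =
     2 * sqrt (query_weight n \<psi> \<sigma> (apply_mat n U v))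
     + hybrid_error n \<psi> \<sigma> (V # Us) (query_op \<psi> (apply_mat n U v))"

lemma qnorm_run_comp_diff:
  fixes Us :: "('w::finite) qmat list"
  assumes \<psi>: "\<psi> permutes {..<NN n}" and \<sigma>: "\<sigma> permutes {..<NN n}"
    and Us: "\<forall>U\<in>set Us. unitary_mat n U"
  shows "qnorm n (\<lambda>s. run n (\<psi> \<circ> \<sigma>) Us v s - run n \<psi> Us v' s)
    \<le> qnorm n (\<lambda>s. v s - v' s) + hybrid_error n \<psi> \<sigma> Us v'"
  using Us
proof (induction Us arbitrary: v v' rule: induct_list012)
  case (2 U)
  then show ?case by (simp add: apply_mat_diff qnorm_apply_mat)
next
  case (3 U V Us)
  define x where "x = apply_mat n U v"
  define y where "y = apply_mat n U v'"
  have U: "unitary_mat n U" using "3.prems" by simp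
  have "qnorm n (\<lambda>s. query_op (\<psi> \<circ> \<sigma>) x s - query_op \<psi> y s)
      \<le> qnorm n (\<lambda>s. query_op (\<psi> \<circ> \<sigma>) x s - query_op (\<psi> \<circ> \<sigma>) y s)
        + qnorm n (\<lambda>s. query_op (\<psi> \<circ> \<sigma>) y s - query_op \<psi> y s)"
    by (rule qnorm_triangle)
  also have "\<dots> \<le> qnorm n (\<lambda>s. v s - v' s) + 2 * sqrt (query_weight n \<psi> \<sigma> y)"
    using qnorm_query_op_comp_diff[OF \<psi> \<sigma>, of y]
    unfolding query_op_diff qnorm_query_op[OF permutes_compose[OF \<sigma> \<psi>]] x_def y_def
      apply_mat_diff qnorm_apply_mat[OF U] by simp
  moreover have "qnorm n (\<lambda>s. run n (\<psi> \<circ> \<sigma>) (V # Us) (query_op (\<psi> \<circ> \<sigma>) x) s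
        - run n \<psi> (V # Us) (query_op \<psi> y) s)
      \<le> qnorm n (\<lambda>s. query_op (\<psi> \<circ> \<sigma>) x s - query_op \<psi> y s)
        + hybrid_error n \<psi> \<sigma> (V # Us) (query_op \<psi> y)"
    using "3.prems" by (intro "3.IH"(2)) simp
  ultimately show ?case
    unfolding run.simps(3) hybrid_error.simps(3) x_def[symmetric] y_def[symmetric] by linarith
qed simp

lemma sum_hybrid_error_le:
  fixes Us :: "('w::finite) qmat list"
  assumes \<psi>: "\<psi> permutes {..<NN n}" and Us: "\<forall>U\<in>set Us. unitary_mat n U"
    and F: "\<And>v::'w qstate. qnorm n v \<le> 1 \<Longrightarrow> (\<Sum>\<sigma>\<in>F. sqrt (query_weight n \<psi> \<sigma> v)) \<le> r"
  shows "qnorm n v \<le> 1 \<Longrightarrow> (\<Sum>\<sigma>\<in>F. hybrid_error n \<psi> \<sigma> Us v) \<le> 2 * real (length Us - 1) * r"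
  using Us
proof (induction Us arbitrary: v rule: induct_list012)
  case (3 U V Us)
  define x where "x = apply_mat n U v"
  have x: "qnorm n x \<le> 1" "qnorm n (query_op \<psi> x) \<le> 1"
    using "3.prems" by (simp_all add: x_def qnorm_apply_mat qnorm_query_op[OF \<psi>])
  have "(\<Sum>\<sigma>\<in>F. hybrid_error n \<psi> \<sigma> (U # V # Us) v)
      = 2 * (\<Sum>\<sigma>\<in>F. sqrt (query_weight n \<psi> \<sigma> x)) + (\<Sum>\<sigma>\<in>F. hybrid_error n \<psi> \<sigma> (V # Us) (query_op \<psi> x))"
    by (simp add: x_def sum.distrib sum_distrib_left)
  also have "\<dots> \<le> 2 * r + 2 * real (length (V # Us) - 1) * r"
    using F[OF x(1)] "3.IH"[OF x(2)] "3.prems" by simp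
  finally show ?case by (simp add: algebra_simps)
qed simp_all

lemma sum_sqrt_le:
  assumes "finite F" "\<And>i. i \<in> F \<Longrightarrow> 0 \<le> f i"
  shows "(\<Sum>i\<in>F. sqrt (f i)) \<le> sqrt (real (card F) * (\<Sum>i\<in>F. f i))"
proof (rule real_le_rsqrt)
  have "(\<Sum>i\<in>F. 1 * sqrt (f i))\<^sup>2 \<le> (\<Sum>i\<in>F. 1\<^sup>2) * (\<Sum>i\<in>F. (sqrt (f i))\<^sup>2)"
    by (rule Cauchy_Schwarz_ineq_sum)
  then show "(\<Sum>i\<in>F. sqrt (f i))\<^sup>2 \<le> real (card F) * (\<Sum>i\<in>F. f i)" using assms(2) by simp
qed

lemma sum_sqrt_weight_le:
  fixes v :: "('w::finite) qstate"
  assumes F: "finite F" and v: "qnorm n v \<le> 1" and c: "0 \<le> c"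
    and count: "\<And>s. s \<in> Basis n \<Longrightarrow> real (card {\<sigma>\<in>F. P \<sigma> s}) \<le> c * real (card F)"
  shows "(\<Sum>\<sigma>\<in>F. sqrt (weight n (P \<sigma>) v)) \<le> real (card F) * sqrt c"
proof -
  have "(\<Sum>\<sigma>\<in>F. weight n (P \<sigma>) v) = (\<Sum>s\<in>Basis n. (cmod (v s))\<^sup>2 * real (card {\<sigma>\<in>F. P \<sigma> s}))"
    unfolding weight_def
    by (subst sum.swap) (simp add: sum.inter_filter[OF F, symmetric] mult.commute)
  also have "\<dots> \<le> (\<Sum>s\<in>Basis n. (cmod (v s))\<^sup>2 * (c * real (card F)))"
    by (intro sum_mono mult_left_mono count) simp_all
  also have "\<dots> = (qnorm n v)\<^sup>2 * (c * real (card F))"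
    by (simp add: qnorm_sq sum_distrib_right)
  also have "\<dots> \<le> c * real (card F)"
    using v c by (intro mult_left_le_one_le) (simp_all add: power_le_one qnorm_def)
  finally have sum: "(\<Sum>\<sigma>\<in>F. weight n (P \<sigma>) v) \<le> c * real (card F)" .
  have "(\<Sum>\<sigma>\<in>F. sqrt (weight n (P \<sigma>) v)) \<le> sqrt (real (card F) * (\<Sum>\<sigma>\<in>F. weight n (P \<sigma>) v))"
    by (rule sum_sqrt_le[OF F]) (simp add: weight_def sum_nonneg)
  also have "\<dots> \<le> sqrt ((real (card F))\<^sup>2 * c)"
    using mult_left_mono[OF sum, of "real (card F)"]
    by (intro real_sqrt_le_mono) (simp add: power2_eq_square mult_ac)
  finally show ?thesis by (simp add: real_sqrt_mult)
qed

lemma success_prob_eq_weight: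
  "success_prob n \<phi> Us s0 out = weight n (\<lambda>s. zero_pair n \<phi> (out s)) (run n \<phi> Us (ket s0))"
  unfolding success_prob_def weight_def ..

lemma success_prob_le_1:
  fixes Us :: "('w::finite) qmat list"
  assumes "\<phi> permutes {..<NN n}" "\<forall>U\<in>set Us. unitary_mat n U" "s0 \<in> Basis n"
  shows "success_prob n \<phi> Us s0 out \<le> 1"
  using weight_le_qnorm_sq[of n _ "run n \<phi> Us (ket s0)"] qnorm_run[OF assms(1,2)] qnorm_ket[OF assms(3)]
  by (simp add: success_prob_eq_weight)

lemma success_prob_comp_le:
  fixes Us :: "('w::finite) qmat list"
  assumes \<psi>: "\<psi> permutes {..<NN n}" and \<sigma>: "\<sigma> permutes {..<NN n}"
    and Us: "\<forall>U\<in>set Us. unitary_mat n U" and s0: "s0 \<in> Basis n"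
  shows "success_prob n (\<psi> \<circ> \<sigma>) Us s0 out
    \<le> sqrt (weight n (\<lambda>s. zero_pair n (\<psi> \<circ> \<sigma>) (out s)) (run n \<psi> Us (ket s0)))
      + hybrid_error n \<psi> \<sigma> Us (ket s0)"
proof -
  let ?P = "\<lambda>s. zero_pair n (\<psi> \<circ> \<sigma>) (out s)"
  have p: "0 \<le> success_prob n (\<psi> \<circ> \<sigma>) Us s0 out" "success_prob n (\<psi> \<circ> \<sigma>) Us s0 out \<le> 1"
    using success_prob_le_1[OF permutes_compose[OF \<sigma> \<psi>] Us s0]
    by (simp_all add: success_prob_def sum_nonneg)
  have "success_prob n (\<psi> \<circ> \<sigma>) Us s0 out \<le> sqrt (success_prob n (\<psi> \<circ> \<sigma>) Us s0 out)"
    using p by (intro real_le_rsqrt) (simp add: power2_eq_square mult_left_le_one_le)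
  also have "\<dots> \<le> sqrt (weight n ?P (run n \<psi> Us (ket s0)))
      + qnorm n (\<lambda>s. run n (\<psi> \<circ> \<sigma>) Us (ket s0) s - run n \<psi> Us (ket s0) s)"
    unfolding success_prob_eq_weight by (rule sqrt_weight_le_add_qnorm)
  also have "\<dots> \<le> sqrt (weight n ?P (run n \<psi> Us (ket s0))) + hybrid_error n \<psi> \<sigma> Us (ket s0)"
    using qnorm_run_comp_diff[OF \<psi> \<sigma> Us, of "ket s0" "ket s0"] by (simp add: qnorm_def L2_set_def)
  finally show ?thesis .
qed

section \<open>Zero pairs and the relabelling bijection\<close>

definition zero_block :: "nat \<Rightarrow> nat set" where
  "zero_block n = (\<lambda>i. i * 2 ^ n) ` {..<2 ^ n}"

definition zero_inputs :: "nat \<Rightarrow> (nat \<Rightarrow> nat) \<Rightarrow> nat set" where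
  "zero_inputs n \<phi> = {z\<in>zero_block n. \<phi> z \<in> zero_block n}"

definition free_inputs :: "nat \<Rightarrow> (nat \<Rightarrow> nat) \<Rightarrow> nat set" where
  "free_inputs n \<phi> = {x\<in>{..<NN n}. x \<notin> zero_block n \<and> \<phi> x \<notin> zero_block n}"

definition zero_preimages :: "nat \<Rightarrow> (nat \<Rightarrow> nat) \<Rightarrow> nat set" where
  "zero_preimages n \<psi> = {x\<in>{..<NN n}. \<psi> x \<in> zero_block n}"

lemma NN_eq: "NN n = 2 ^ n * 2 ^ n"
  by (simp add: NN_def power_add[symmetric] mult_2)

lemma zero_block_subset: "zero_block n \<subseteq> {..<NN n}"
  unfolding zero_block_def NN_eq by auto

lemma finite_zero_block: "finite (zero_block n)"
  unfolding zero_block_def by simp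

lemma card_zero_block: "card (zero_block n) = 2 ^ n"
  unfolding zero_block_def by (subst card_image) (auto intro: inj_onI)

lemma card_zero_preimages:
  assumes \<psi>: "\<psi> permutes {..<NN n}"
  shows "card (zero_preimages n \<psi>) = 2 ^ n"
proof -
  have "\<psi> ` zero_preimages n \<psi> = zero_block n"
  proof (intro equalityI subsetI)
    fix z assume z: "z \<in> zero_block n"
    then have "inv \<psi> z \<in> zero_preimages n \<psi>"
      using zero_block_subset permutes_in_image[OF permutes_inv[OF \<psi>]] permutes_inverses(1)[OF \<psi>]
      unfolding zero_preimages_def by auto
    then show "z \<in> \<psi> ` zero_preimages n \<psi>" using permutes_inverses(1)[OF \<psi>] by (metis image_eqI)
  qed (auto simp: zero_preimages_def)
  then show ?thesis
    using card_image[OF inj_on_subset[OF permutes_inj[OF \<psi>] subset_UNIV]] card_zero_block by metis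
qed

lemma card_zero_pairs: "card (zero_pairs n \<phi>) = card (zero_inputs n \<phi>)"
proof -
  have "bij_betw (\<lambda>p. fst p * 2 ^ n) (zero_pairs n \<phi>) (zero_inputs n \<phi>)"
  proof (rule bij_betw_imageI)
    show "inj_on (\<lambda>p. fst p * 2 ^ n) (zero_pairs n \<phi>)"
      by (rule inj_onI) (auto simp: zero_pairs_def zero_pair_def prod_eq_iff)
    show "(\<lambda>p. fst p * 2 ^ n) ` zero_pairs n \<phi> = zero_inputs n \<phi>"
      by (force simp: zero_pairs_def zero_pair_def zero_inputs_def zero_block_def image_iff)
  qed
  then show ?thesis by (rule bij_betw_same_card)
qed

lemma S_kappa_iff: "\<phi> \<in> S_kappa n k \<longleftrightarrow> \<phi> permutes {..<NN n} \<and> card (zero_inputs n \<phi>) = k"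
  unfolding S_kappa_def card_zero_pairs by simp

lemma S_kappa_0_iff:
  "\<psi> \<in> S_kappa n 0 \<longleftrightarrow> \<psi> permutes {..<NN n} \<and> (\<forall>z\<in>zero_block n. \<psi> z \<notin> zero_block n)"
  unfolding S_kappa_iff by (auto simp: zero_inputs_def finite_zero_block)

lemma finite_S_kappa: "finite (S_kappa n k)"
  by (rule finite_subset[of _ "{\<phi>. \<phi> permutes {..<NN n}}"])
    (auto simp: S_kappa_def intro: finite_permutations)

lemma card_free_inputs:
  assumes \<phi>: "\<phi> permutes {..<NN n}"
  shows "card (free_inputs n \<phi>) = NN n - (2 * 2 ^ n - card (zero_inputs n \<phi>))"
proof -
  let ?U = "zero_block n \<union> zero_preimages n \<phi>"
  have "free_inputs n \<phi> = {..<NN n} - ?U"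
    unfolding free_inputs_def zero_preimages_def by blast
  moreover have "zero_block n \<inter> zero_preimages n \<phi> = zero_inputs n \<phi>"
    using zero_block_subset unfolding zero_inputs_def zero_preimages_def by blast
  then have "card ?U = 2 * 2 ^ n - card (zero_inputs n \<phi>)"
    using card_Un_Int[OF finite_zero_block, of "zero_preimages n \<phi>" n] card_zero_block
      card_zero_preimages[OF \<phi>] by (simp add: zero_preimages_def)
  moreover have "?U \<subseteq> {..<NN n}" using zero_block_subset unfolding zero_preimages_def by blast
  ultimately show ?thesis using card_Diff_subset[of ?U "{..<NN n}"] finite_subset[of ?U "{..<NN n}"] by simp
qed

lemma zero_block_Int_zero_preimages:
  "\<psi> \<in> S_kappa n 0 \<Longrightarrow> zero_block n \<inter> zero_preimages n \<psi> = {}"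
  unfolding S_kappa_0_iff zero_preimages_def by blast

lemma comp_matching_in_S_0:
  assumes \<phi>: "\<phi> \<in> S_kappa n k" and \<sigma>: "\<sigma> \<in> matchings (zero_inputs n \<phi>) (free_inputs n \<phi>) k"
  shows "\<phi> \<circ> \<sigma> \<in> S_kappa n 0" "\<sigma> \<in> matchings (zero_block n) (zero_preimages n (\<phi> \<circ> \<sigma>)) k"
proof -
  let ?Z = "zero_block n" and ?A = "zero_inputs n \<phi>" and ?G = "free_inputs n \<phi>"
  have p: "\<phi> permutes {..<NN n}" and cA: "card ?A = k" using \<phi> by (simp_all add: S_kappa_iff)
  note s = matchingsD[OF \<sigma>]
  have AG: "?A \<subseteq> ?Z" "?G \<subseteq> {..<NN n}" "?G \<inter> ?Z = {}"
    unfolding zero_inputs_def free_inputs_def by auto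
  have all_moved: "{x\<in>?A. \<sigma> x \<noteq> x} = ?A"
    using finite_subset[OF AG(1) finite_zero_block] s(5) cA
    by (intro card_subset_eq Collect_restrict) simp_all
  have \<sigma>A: "\<sigma> ` ?A \<subseteq> ?G" and moved: "\<sigma> x \<noteq> x \<longleftrightarrow> x \<in> ?A \<union> \<sigma> ` ?A" for x
    using matchings_moved(1)[OF \<sigma>] matchings_moved(2)[OF \<sigma>, of x] unfolding all_moved by blast+
  have \<sigma>p: "\<sigma> permutes {..<NN n}"
    by (rule matchings_permutes[OF \<sigma>]) (use AG zero_block_subset in blast)
  have no_zero: "(\<phi> \<circ> \<sigma>) z \<notin> ?Z" if "z \<in> ?Z" for z
  proof (cases "z \<in> ?A")
    case True
    then show ?thesis using \<sigma>A unfolding free_inputs_def by auto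
  next
    case False
    then have "\<sigma> z = z" using moved[of z] \<sigma>A AG(3) that by blast
    then show ?thesis using False that unfolding zero_inputs_def by simp
  qed
  show \<psi>: "\<phi> \<circ> \<sigma> \<in> S_kappa n 0"
    unfolding S_kappa_0_iff using permutes_compose[OF \<sigma>p p] no_zero by blast
  have "\<sigma> ` ?A \<subseteq> zero_preimages n (\<phi> \<circ> \<sigma>)"
    using \<sigma>A AG(2) s(2) unfolding zero_preimages_def zero_inputs_def by auto
  then show "\<sigma> \<in> matchings ?Z (zero_preimages n (\<phi> \<circ> \<sigma>)) k"
    by (rule matchingsI[OF s(2) zero_block_Int_zero_preimages[OF \<psi>] AG(1) _ cA moved])
qed

lemma comp_matching_in_S_kappa:
  assumes \<psi>: "\<psi> \<in> S_kappa n 0" and \<sigma>: "\<sigma> \<in> matchings (zero_block n) (zero_preimages n \<psi>) k"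
  shows "\<psi> \<circ> \<sigma> \<in> S_kappa n k" "\<sigma> \<in> matchings (zero_inputs n (\<psi> \<circ> \<sigma>)) (free_inputs n (\<psi> \<circ> \<sigma>)) k"
proof -
  let ?Z = "zero_block n" and ?Y = "zero_preimages n \<psi>"
  define P where "P = {x\<in>?Z. \<sigma> x \<noteq> x}"
  have p: "\<psi> permutes {..<NN n}" and no_zero: "\<And>z. z \<in> ?Z \<Longrightarrow> \<psi> z \<notin> ?Z"
    using \<psi> by (simp_all add: S_kappa_0_iff)
  note s = matchingsD[OF \<sigma>]
  have \<sigma>P: "\<sigma> ` P \<subseteq> ?Y" and moved: "\<sigma> x \<noteq> x \<longleftrightarrow> x \<in> P \<union> \<sigma> ` P" for x
    using matchings_moved(1)[OF \<sigma>] matchings_moved(2)[OF \<sigma>, of x] unfolding P_def by blast+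
  have \<sigma>p: "\<sigma> permutes {..<NN n}"
    by (rule matchings_permutes[OF \<sigma>]) (use zero_block_subset in \<open>auto simp: zero_preimages_def\<close>)
  have AP: "zero_inputs n (\<psi> \<circ> \<sigma>) = P"
    using \<sigma>P no_zero unfolding zero_inputs_def P_def zero_preimages_def by fastforce
  show "\<psi> \<circ> \<sigma> \<in> S_kappa n k"
    unfolding S_kappa_iff AP using permutes_compose[OF \<sigma>p p] s(5) by (simp add: P_def)
  have \<sigma>P_free: "\<sigma> ` P \<subseteq> free_inputs n (\<psi> \<circ> \<sigma>)"
    using \<sigma>P s(2) no_zero zero_block_Int_zero_preimages[OF \<psi>]
    unfolding free_inputs_def zero_preimages_def P_def by auto
  have "P \<inter> free_inputs n (\<psi> \<circ> \<sigma>) = {}"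
    unfolding free_inputs_def P_def by blast
  from matchingsI[OF s(2) this subset_refl \<sigma>P_free _ moved]
  show "\<sigma> \<in> matchings (zero_inputs n (\<psi> \<circ> \<sigma>)) (free_inputs n (\<psi> \<circ> \<sigma>)) k"
    unfolding AP using s(5) by (simp add: P_def)
qed

lemma bij_betw_relabel:
  "bij_betw (\<lambda>(\<phi>, \<sigma>). (\<phi> \<circ> \<sigma>, \<sigma>))
     (SIGMA \<phi>:S_kappa n k. matchings (zero_inputs n \<phi>) (free_inputs n \<phi>) k)
     (SIGMA \<psi>:S_kappa n 0. matchings (zero_block n) (zero_preimages n \<psi>) k)"
proof (rule bij_betw_byWitness[where f' = "\<lambda>(\<phi>, \<sigma>). (\<phi> \<circ> \<sigma>, \<sigma>)"])
qed (auto simp: matchings_comp_cancel dest: comp_matching_in_S_0 comp_matching_in_S_kappa)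

section \<open>Averaging over \<open>S\<^sub>N\<^sup>\<kappa>\<close>\<close>

lemma card_matchings_fibre_eq:
  assumes "\<phi> \<in> S_kappa n k" "\<phi>' \<in> S_kappa n k"
  shows "card (matchings (zero_inputs n \<phi>) (free_inputs n \<phi>) k)
    = card (matchings (zero_inputs n \<phi>') (free_inputs n \<phi>') k)"
proof -
  have sub: "zero_inputs n f \<union> free_inputs n f \<subseteq> {..<NN n}"
    and dj: "zero_inputs n f \<inter> free_inputs n f = {}" for f
    using zero_block_subset unfolding zero_inputs_def free_inputs_def by auto
  have "card (zero_inputs n \<phi>) = card (zero_inputs n \<phi>')"
    and "card (free_inputs n \<phi>) = card (free_inputs n \<phi>')"
    using assms card_free_inputs by (simp_all add: S_kappa_iff)
  then obtain \<pi> where \<pi>: "bij \<pi>" "\<pi> ` zero_inputs n \<phi> = zero_inputs n \<phi>'"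
    "\<pi> ` free_inputs n \<phi> = free_inputs n \<phi>'"
    using ex_bij_image_pair[OF finite_lessThan sub sub dj dj] by blast
  show ?thesis
    using bij_betw_same_card[OF bij_betw_conj_matchings[OF \<pi>(1), of "zero_inputs n \<phi>" "free_inputs n \<phi>" k]] unfolding \<pi>(2,3) .
qed

lemma matchings_fibre_nonempty:
  assumes n: "1 \<le> n" and k: "k \<le> 2 ^ n" and \<phi>: "\<phi> \<in> S_kappa n k"
  shows "matchings (zero_inputs n \<phi>) (free_inputs n \<phi>) k \<noteq> {}"
proof -
  have p: "\<phi> permutes {..<NN n}" and cA: "card (zero_inputs n \<phi>) = k"
    using \<phi> by (simp_all add: S_kappa_iff)
  have "2 * 2 ^ n \<le> NN n"
    using n unfolding NN_eq by (intro mult_right_mono) (simp_all add: self_le_power)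
  then have le: "card (zero_inputs n \<phi>) \<le> card (free_inputs n \<phi>)"
    using card_free_inputs[OF p] cA k by arith
  have dj: "zero_inputs n \<phi> \<inter> free_inputs n \<phi> = {}"
    unfolding zero_inputs_def free_inputs_def by blast
  have fin: "finite (zero_inputs n \<phi>)" "finite (free_inputs n \<phi>)"
    by (simp_all add: zero_inputs_def free_inputs_def finite_zero_block)
  show ?thesis using matchings_nonempty[OF dj fin le] unfolding cA .
qed

lemma card_matchings_moving_le:
  fixes k :: nat
  assumes \<psi>: "\<psi> \<in> S_kappa n 0"
  defines "M \<equiv> matchings (zero_block n) (zero_preimages n \<psi>) k"
  shows "real (card {\<sigma>\<in>M. \<sigma> b \<noteq> b}) \<le> real k / 2 ^ n * real (card M)"
proof -
  have fin: "finite (zero_block n)" "finite (zero_preimages n \<psi>)"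
    by (simp_all add: finite_zero_block zero_preimages_def)
  have dj: "zero_block n \<inter> zero_preimages n \<psi> = {}" by (rule zero_block_Int_zero_preimages[OF \<psi>])
  have card: "card (zero_preimages n \<psi>) = 2 ^ n"
    using \<psi> card_zero_preimages by (simp add: S_kappa_0_iff)
  consider "b \<in> zero_block n" | "b \<in> zero_preimages n \<psi>" | "b \<notin> zero_block n \<union> zero_preimages n \<psi>"
    by blast
  then have count: "card {\<sigma>\<in>M. \<sigma> b \<noteq> b} * 2 ^ n \<le> k * card M"
  proof cases
    case 1
    then show ?thesis using card_matchings_moving[OF fin dj 1] card_zero_block by (simp add: M_def)
  next
    case 2
    have "zero_preimages n \<psi> \<inter> zero_block n = {}" using dj by blast
    from card_matchings_moving[OF fin(2,1) this 2, of k] show ?thesis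
      unfolding M_def matchings_commute[of "zero_block n" "zero_preimages n \<psi>" k] card by simp
  next
    case 3
    have "\<sigma> b = b" if "\<sigma> \<in> M" for \<sigma>
      using permutes_not_in[OF matchingsD(1)[OF that[unfolded M_def]] 3] .
    then have "{\<sigma>\<in>M. \<sigma> b \<noteq> b} = {}" by blast
    then show ?thesis by (simp only: card.empty)
  qed
  have "real (card {\<sigma>\<in>M. \<sigma> b \<noteq> b}) * 2 ^ n \<le> real k * real (card M)"
    using of_nat_le_iff[where 'a = real, THEN iffD2, OF count] by simp
  then show ?thesis by (simp add: field_simps)
qed

lemma zero_pair_comp_moves:
  assumes "\<psi> \<in> S_kappa n 0" and "zero_pair n (\<psi> \<circ> \<sigma>) p"
  shows "\<sigma> (fst p * 2 ^ n) \<noteq> fst p * 2 ^ n"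
proof
  assume "\<sigma> (fst p * 2 ^ n) = fst p * 2 ^ n"
  moreover have "fst p * 2 ^ n \<in> zero_block n" "snd p * 2 ^ n \<in> zero_block n"
    using assms(2) unfolding zero_pair_def zero_block_def by auto
  ultimately show False using assms unfolding S_kappa_0_iff zero_pair_def by auto
qed

lemma sum_success_prob_fibre_le:
  fixes Us :: "('w::finite) qmat list" and k :: nat
  assumes \<psi>: "\<psi> \<in> S_kappa n 0" and Us: "\<forall>U\<in>set Us. unitary_mat n U" and s0: "s0 \<in> Basis n"
  defines "M \<equiv> matchings (zero_block n) (zero_preimages n \<psi>) k"
  shows "(\<Sum>\<sigma>\<in>M. success_prob n (\<psi> \<circ> \<sigma>) Us s0 out)
    \<le> (2 * real (length Us - 1) + 1) * real (card M) * sqrt (real k / 2 ^ n)"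
proof -
  let ?r = "real (card M) * sqrt (real k / 2 ^ n)"
  let ?u = "run n \<psi> Us (ket s0)"
  have p: "\<psi> permutes {..<NN n}" using \<psi> by (simp add: S_kappa_0_iff)
  have finM: "finite M" unfolding M_def by (simp add: finite_matchings finite_zero_block zero_preimages_def)
  have \<sigma>p: "\<sigma> permutes {..<NN n}" if "\<sigma> \<in> M" for \<sigma>
    using matchings_permutes[OF that[unfolded M_def]] zero_block_subset
    unfolding zero_preimages_def by blast
  have averaging: "(\<Sum>\<sigma>\<in>M. sqrt (weight n (P \<sigma>) v)) \<le> ?r"
    if "qnorm n v \<le> 1" "\<And>\<sigma> s. P \<sigma> s \<Longrightarrow> \<sigma> (b s) \<noteq> b s" for P and v :: "'w qstate" and b
  proof (rule sum_sqrt_weight_le[OF finM that(1)])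
    fix s
    have "{\<sigma>\<in>M. P \<sigma> s} \<subseteq> {\<sigma>\<in>M. \<sigma> (b s) \<noteq> b s}" using that(2) by blast
    then have "card {\<sigma>\<in>M. P \<sigma> s} \<le> card {\<sigma>\<in>M. \<sigma> (b s) \<noteq> b s}"
      using finM by (intro card_mono) auto
    then show "real (card {\<sigma>\<in>M. P \<sigma> s}) \<le> real k / 2 ^ n * real (card M)"
      using card_matchings_moving_le[OF \<psi>, of k "b s"] unfolding M_def by linarith
  qed simp
  have "(\<Sum>\<sigma>\<in>M. success_prob n (\<psi> \<circ> \<sigma>) Us s0 out)
      \<le> (\<Sum>\<sigma>\<in>M. sqrt (weight n (\<lambda>s. zero_pair n (\<psi> \<circ> \<sigma>) (out s)) ?u))
        + (\<Sum>\<sigma>\<in>M. hybrid_error n \<psi> \<sigma> Us (ket s0))"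
    unfolding sum.distrib[symmetric] by (intro sum_mono success_prob_comp_le[OF p \<sigma>p Us s0])
  also have "\<dots> \<le> ?r + 2 * real (length Us - 1) * ?r"
  proof (rule add_mono)
    show "(\<Sum>\<sigma>\<in>M. sqrt (weight n (\<lambda>s. zero_pair n (\<psi> \<circ> \<sigma>) (out s)) ?u)) \<le> ?r"
      using zero_pair_comp_moves[OF \<psi>] qnorm_run[OF p Us] qnorm_ket[OF s0] by (intro averaging[where b = "\<lambda>s. fst (out s) * 2 ^ n"]) auto
    have "(\<Sum>\<sigma>\<in>M. sqrt (query_weight n \<psi> \<sigma> v)) \<le> ?r" if "qnorm n v \<le> 1" for v :: "'w qstate"
      unfolding query_weight_def using that by (intro averaging[where b = "query_point \<psi>"])
    then show "(\<Sum>\<sigma>\<in>M. hybrid_error n \<psi> \<sigma> Us (ket s0)) \<le> 2 * real (length Us - 1) * ?r"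
      using sum_hybrid_error_le[OF p Us] qnorm_ket[OF s0] by simp
  qed
  finally show ?thesis by (simp add: algebra_simps)
qed

lemma sum_S_kappa_mult_card_fibre:
  fixes f :: "(nat \<Rightarrow> nat) \<Rightarrow> real"
  assumes c: "\<And>\<phi>. \<phi> \<in> S_kappa n k \<Longrightarrow> card (matchings (zero_inputs n \<phi>) (free_inputs n \<phi>) k) = c"
  shows "(\<Sum>\<phi>\<in>S_kappa n k. f \<phi>) * real c
    = (\<Sum>\<psi>\<in>S_kappa n 0. \<Sum>\<sigma>\<in>matchings (zero_block n) (zero_preimages n \<psi>) k. f (\<psi> \<circ> \<sigma>))"
proof -
  let ?F = "\<lambda>\<phi>. matchings (zero_inputs n \<phi>) (free_inputs n \<phi>) k"
  let ?M = "\<lambda>\<psi>. matchings (zero_block n) (zero_preimages n \<psi>) k"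
  have finF: "finite (?F \<phi>)" and finM: "finite (?M \<psi>)" for \<phi> \<psi>
    by (simp_all add: finite_matchings zero_inputs_def free_inputs_def zero_preimages_def
        finite_zero_block)
  have "(\<Sum>\<phi>\<in>S_kappa n k. f \<phi>) * real c = (\<Sum>\<phi>\<in>S_kappa n k. real c * f \<phi>)"
    unfolding sum_distrib_right by (simp add: mult.commute)
  also have "\<dots> = (\<Sum>\<phi>\<in>S_kappa n k. \<Sum>\<sigma>\<in>?F \<phi>. f \<phi>)"
    using c by (intro sum.cong) simp_all
  also have "\<dots> = (\<Sum>(\<phi>, \<sigma>)\<in>(SIGMA \<phi>:S_kappa n k. ?F \<phi>). f ((\<phi> \<circ> \<sigma>) \<circ> \<sigma>))"
    using finite_S_kappa finF
    by (subst sum.Sigma) (auto intro!: sum.cong simp: matchings_comp_cancel)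
  also have "\<dots> = (\<Sum>(\<psi>, \<sigma>)\<in>(SIGMA \<psi>:S_kappa n 0. ?M \<psi>). f (\<psi> \<circ> \<sigma>))"
    using sum.reindex_bij_betw[OF bij_betw_relabel, of "\<lambda>(\<psi>, \<sigma>). f (\<psi> \<circ> \<sigma>)"]
    by (simp add: case_prod_beta')
  also have "\<dots> = (\<Sum>\<psi>\<in>S_kappa n 0. \<Sum>\<sigma>\<in>?M \<psi>. f (\<psi> \<circ> \<sigma>))"
    using finite_S_kappa finM by (subst sum.Sigma) auto
  finally show ?thesis .
qed

lemma avg_success_le:
  fixes Us :: "('w::finite) qmat list"
  assumes n: "1 \<le> n" and k: "k \<le> 2 ^ n"
    and Us: "\<forall>U\<in>set Us. unitary_mat n U" and s0: "s0 \<in> Basis n"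
  shows "avg_success n k Us s0 out \<le> (2 * real (length Us - 1) + 1) * sqrt (real k / 2 ^ n)"
proof (cases "S_kappa n k = {}")
  case False
  let ?B = "(2 * real (length Us - 1) + 1) * sqrt (real k / 2 ^ n)"
  let ?F = "\<lambda>\<phi>. matchings (zero_inputs n \<phi>) (free_inputs n \<phi>) k"
  let ?M = "\<lambda>\<psi>. matchings (zero_block n) (zero_preimages n \<psi>) k"
  obtain \<phi>\<^sub>0 where \<phi>\<^sub>0: "\<phi>\<^sub>0 \<in> S_kappa n k" using False by blast
  define c where "c = card (?F \<phi>\<^sub>0)"
  have c: "card (?F \<phi>) = c" if "\<phi> \<in> S_kappa n k" for \<phi>
    unfolding c_def using card_matchings_fibre_eq[OF that \<phi>\<^sub>0] .
  have "c > 0"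
    using matchings_fibre_nonempty[OF n k \<phi>\<^sub>0] finite_matchings[of "zero_inputs n \<phi>\<^sub>0" "free_inputs n \<phi>\<^sub>0" k]
    by (simp add: c_def card_gt_0_iff zero_inputs_def free_inputs_def finite_zero_block)
  have "(\<Sum>\<phi>\<in>S_kappa n k. success_prob n \<phi> Us s0 out) * real c
      = (\<Sum>\<psi>\<in>S_kappa n 0. \<Sum>\<sigma>\<in>?M \<psi>. success_prob n (\<psi> \<circ> \<sigma>) Us s0 out)"
    by (rule sum_S_kappa_mult_card_fibre[OF c])
  also have "\<dots> \<le> (\<Sum>\<psi>\<in>S_kappa n 0. ?B * real (card (?M \<psi>)))"
    using sum_success_prob_fibre_le[OF _ Us s0] by (intro sum_mono) (simp add: mult_ac)
  also have "\<dots> = ?B * ((\<Sum>\<phi>\<in>S_kappa n k. 1) * real c)"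
    using sum_S_kappa_mult_card_fibre[OF c, of "\<lambda>_. 1"] by (simp add: sum_distrib_left)
  finally have "(\<Sum>\<phi>\<in>S_kappa n k. success_prob n \<phi> Us s0 out) \<le> ?B * real (card (S_kappa n k))"
    using \<open>c > 0\<close> by (simp add: mult.assoc)
  then show ?thesis
    using False finite_S_kappa by (simp add: avg_success_def divide_le_eq card_gt_0_iff)
qed (simp add: avg_success_def)

lemma avg_success_le_1:
  fixes Us :: "('w::finite) qmat list"
  assumes "\<forall>U\<in>set Us. unitary_mat n U" "s0 \<in> Basis n"
  shows "avg_success n k Us s0 out \<le> 1"
proof -
  have "(\<Sum>\<phi>\<in>S_kappa n k. success_prob n \<phi> Us s0 out) \<le> (\<Sum>\<phi>\<in>S_kappa n k. 1)"
    using success_prob_le_1[OF _ assms] by (intro sum_mono) (simp add: S_kappa_iff)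
  then show ?thesis
    by (cases "card (S_kappa n k) = 0") (simp_all add: avg_success_def divide_le_eq_1)
qed

theorem lemma4:
  fixes n \<kappa> T :: nat and Us :: "('w::finite) qmat list" and s0 :: "'w basis"
    and out :: "'w basis \<Rightarrow> nat \<times> nat" and \<epsilon> :: real
  assumes "1 \<le> \<kappa>" and "\<kappa> \<le> 2 ^ n"
    and "length Us = T + 1"
    and "\<forall>U\<in>set Us. unitary_mat n U"
    and "s0 \<in> Basis n"
    and "\<epsilon> = avg_success n \<kappa> Us s0 out"
    and "\<epsilon> > 0"
  shows "\<epsilon> \<le> 2 * (real T + 1) * sqrt (real \<kappa> / 2 ^ n)"
proof (cases "n = 0")
  case True
  \<comment> \<open>then the zero block is everything, so there is nothing to match with; but \<open>\<kappa> = 2\<^sup>n\<close>\<close>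
  have "\<epsilon> \<le> 1" using avg_success_le_1[OF assms(4,5)] assms(6) by simp
  also have "1 \<le> 2 * (real T + 1) * sqrt (real \<kappa> / 2 ^ n)" using True assms(1,2) by simp
  finally show ?thesis .
next
  case False
  then have "\<epsilon> \<le> (2 * real T + 1) * sqrt (real \<kappa> / 2 ^ n)"
    using avg_success_le[OF _ assms(2,4,5)] assms(3,6) by simp
  also have "\<dots> \<le> 2 * (real T + 1) * sqrt (real \<kappa> / 2 ^ n)"
    by (intro mult_right_mono) simp_all
  finally show ?thesis .
qed

end
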